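(* Pruning is correct, i.e., (1) If ⟨E, C^WW, C^WR⟩ ↪* ⟨E_p, C^WW_p, C^WR_p⟩, then G is SER-acyclic if and only if G_p is SER-acyclic. (2) If ⟨E, C^WW, C^WR⟩ ↪* S_#, then G is not SER-acyclic.
   Context: A history H = (T, SO) consists of a set T of committed transactions (key-value reads R(x,v) and writes W(x,v)) and a session order SO. WriteTx_x denotes the set of transactions writing key x. The hyper-polygraph of H is G = (V, E, (C^WW, C^WR)) where V is the set of transactions, E is the set of known edges (labelled SO, WR, WW, RW with a key; initially the SO edges and the WR edges whose read value has a unique writer), C^WW = {{T →WW(x) S, S →WW(x) T} | T, S ∈ WriteTx_x, T ≠ S}, and C^WR = {{T_i →WR(x) S | T_i writes v to x} | S reads v from x}. A graph G' = (V, E') is compatible with G if E' ⊇ E, E' contains exactly one edge from each constraint in C^WW and in C^WR, and E' is closed under the derivation rule: T' →WR(x) T and T' →WW(x) S in E' imply T →RW(x) S in E'. G is called SER-acyclic if some compatible graph is acyclic (equivalently, for the hyper-polygraph of H, H satisfies Serializability, given H satisfies internal consistency). Pruning is modelled as a transition system ↪ on states ⟨E, C^WW, C^WR⟩, starting from the components of G; a state ⟨E_p, C^WW_p, C^WR_p⟩ corresponds to the hyper-polygraph G_p = (V, E_p, (C^WW_p, C^WR_p)). The rules, applied nondeterministically until none applies, are: - No-Choice: if ∅ ∈ C^WW ∪ C^WR, move to the terminal violation state S_#. - Cycle: if E is cyclic, move to S_#. - WW-Elim: for cons ∈ C^WW containing T →WW(x) T', if E ∪ ({T →WW(x) T'}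 ∪ {S →RW(x) T' | T →WR(x) S ∈ E}) is cyclic, replace cons by cons \ {T →WW(x) T'}. - WR-Elim: for cons ∈ C^WR containing T →WR(x) S, if E ∪ ({T →WR(x) S} ∪ {S →RW(x) T' | T →WW(x) T' ∈ E}) is cyclic, replace cons by cons \ {T →WR(x) S}. - WW-Intro: if a singleton {T →WW(x) T'} ∈ C^WW, remove it from C^WW and add {T →WW(x) T'} ∪ {S →RW(x) T' | T →WR(x) S ∈ E} to E. - WR-Intro: if a singleton {T →WR(x) S} ∈ C^WR, remove it from C^WR and add {T →WR(x) S} ∪ {S →RW(x) T' | T →WW(x) T' ∈ E} to E. ↪* denotes a finite sequence of such transitions. *)

theory Defs
  imports Main
begin

datatype ('k, 'v) op = R 'k 'v | W 'k 'v

record ('t, 'k, 'v) history =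
  txns :: "'t set"
  ops  :: "'t \<Rightarrow> ('k, 'v) op list"
  so   :: "'t rel"

definition wf_history :: "('t, 'k, 'v) history \<Rightarrow> bool" where
  "wf_history H \<longleftrightarrow> so H \<subseteq> txns H \<times> txns H"

definition writes :: "('t, 'k, 'v) history \<Rightarrow> 't \<Rightarrow> 'k \<Rightarrow> 'v \<Rightarrow> bool" where
  "writes H t x v \<longleftrightarrow> t \<in> txns H \<and> W x v \<in> set (ops H t)"

definition reads :: "('t, 'k, 'v) history \<Rightarrow> 't \<Rightarrow> 'k \<Rightarrow> 'v \<Rightarrow> bool" where
  "reads H t x v \<longleftrightarrow> t \<in> txns H \<and> R x v \<in> set (ops H t)"

definition WriteTx :: "('t, 'k, 'v) history \<Rightarrow> 'k \<Rightarrow> 't set" where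
  "WriteTx H x = {t \<in> txns H. \<exists>v. W x v \<in> set (ops H t)}"

datatype 'k label = SO | WR 'k | WW 'k | RW 'k

type_synonym ('t, 'k) edge = "'t \<times> 'k label \<times> 't"

definition cyclic :: "('t, 'k) edge set \<Rightarrow> bool" where
  "cyclic E \<longleftrightarrow> \<not> acyclic {(a, b). \<exists>l. (a, l, b) \<in> E}"

type_synonym ('t, 'k) hpg =
  "'t set \<times> ('t, 'k) edge set \<times> ('t, 'k) edge set set \<times> ('t, 'k) edge set set"

definition hyper_polygraph :: "('t, 'k, 'v) history \<Rightarrow> ('t, 'k) hpg" where
  "hyper_polygraph H =
    (txns H,
     {(t, SO, s) | t s. (t, s) \<in> so H}
       \<union> {(t, WR x, s) | t x s. \<exists>v. reads H s x v \<and> (\<forall>t'. writes H t' x v \<longleftrightarrow> t' = t)},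
     {{(t, WW x, s), (s, WW x, t)} | t s x. t \<in> WriteTx H x \<and> s \<in> WriteTx H x \<and> t \<noteq> s},
     {{(t, WR x, s) | t. writes H t x v} | s x v. reads H s x v})"

definition rw_closed :: "('t, 'k) edge set \<Rightarrow> bool" where
  "rw_closed E' \<longleftrightarrow>
     (\<forall>t' t s x. (t', WR x, t) \<in> E' \<and> (t', WW x, s) \<in> E' \<longrightarrow> (t, RW x, s) \<in> E')"

definition compatible :: "('t, 'k) hpg \<Rightarrow> ('t, 'k) edge set \<Rightarrow> bool" where
  "compatible G E' \<longleftrightarrow>
    (case G of (V, E, Cww, Cwr) \<Rightarrow>
       (\<forall>(a, l, b) \<in> E'. a \<in> V \<and> b \<in> V)
       \<and> E \<subseteq> E'
       \<and> (\<forall>c \<in> Cww. \<exists>!e. e \<in> c \<and> e \<in> E')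
       \<and> (\<forall>c \<in> Cwr. \<exists>!e. e \<in> c \<and> e \<in> E')
       \<and> rw_closed E')"

definition ser_acyclic :: "('t, 'k) hpg \<Rightarrow> bool" where
  "ser_acyclic G \<longleftrightarrow> (\<exists>E'. compatible G E' \<and> \<not> cyclic E')"

datatype ('t, 'k) pstate =
    St "('t, 'k) edge set" "('t, 'k) edge set set" "('t, 'k) edge set set"
  | Viol  \<comment> \<open>the terminal violation state S_#\<close>

inductive prune_step :: "('t, 'k) pstate \<Rightarrow> ('t, 'k) pstate \<Rightarrow> bool" where
  no_choice: "{} \<in> Cww \<union> Cwr \<Longrightarrow> prune_step (St E Cww Cwr) Viol"
| cycle: "cyclic E \<Longrightarrow> prune_step (St E Cww Cwr) Viol"
| ww_elim: "\<lbrakk> c \<in> Cww; (t, WW x, t') \<in> c;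
             cyclic (E \<union> ({(t, WW x, t')} \<union> {(s, RW x, t') | s. (t, WR x, s) \<in> E})) \<rbrakk>
   \<Longrightarrow> prune_step (St E Cww Cwr) (St E ((Cww - {c}) \<union> {c - {(t, WW x, t')}}) Cwr)"
| wr_elim: "\<lbrakk> c \<in> Cwr; (t, WR x, s) \<in> c;
             cyclic (E \<union> ({(t, WR x, s)} \<union> {(s, RW x, t') | t'. (t, WW x, t') \<in> E})) \<rbrakk>
   \<Longrightarrow> prune_step (St E Cww Cwr) (St E Cww ((Cwr - {c}) \<union> {c - {(t, WR x, s)}}))"
| ww_intro: "{(t, WW x, t')} \<in> Cww
   \<Longrightarrow> prune_step (St E Cww Cwr)
         (St (E \<union> ({(t, WW x, t')} \<union> {(s, RW x, t') | s. (t, WR x, s) \<in> E}))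
             (Cww - {{(t, WW x, t')}}) Cwr)"
| wr_intro: "{(t, WR x, s)} \<in> Cwr
   \<Longrightarrow> prune_step (St E Cww Cwr)
         (St (E \<union> ({(t, WR x, s)} \<union> {(s, RW x, t') | t'. (t, WW x, t') \<in> E}))
             Cww (Cwr - {{(t, WR x, s)}}))"

end

theory Submission
  imports Defs
begin

text \<open>Every pruning step leaves the set of acyclic compatible graphs unchanged. An edge
  eliminated from a constraint lies in no such graph, because an RW-closed graph containing
  it and the known edges also contains the RW edges it derives, and these already form a
  cycle. An introduced edge is forced, its constraint being a singleton, and so are the RW
  edges it derives. A step to S_# happens only when some constraint offers no choice or the
  known edges are cyclic, and then no acyclic compatible graph exists; reading S_# as not
  SER-acyclic, every step therefore preserves SER-acyclicity in both directions. Nothing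
  about the history is used: the argument applies to any initial hyper-polygraph.\<close>

lemma cyclic_mono: "cyclic A \<Longrightarrow> A \<subseteq> B \<Longrightarrow> cyclic B"
  unfolding cyclic_def by (erule contrapos_nn, erule acyclic_subset) blast

definition selects_one :: "('t, 'k) edge set set \<Rightarrow> ('t, 'k) edge set \<Rightarrow> bool" where
  "selects_one C E' \<longleftrightarrow> (\<forall>c \<in> C. \<exists>!e. e \<in> c \<and> e \<in> E')"

lemma selects_one_empty: "{} \<in> C \<Longrightarrow> \<not> selects_one C E'"
  unfolding selects_one_def by blast

lemma selects_one_remove_unselected:
  assumes "c \<in> C" "e \<notin> E'"
  shows "selects_one ((C - {c}) \<union> {c - {e}}) E' \<longleftrightarrow> selects_one C E'"
proof -
  define P where "P d \<longleftrightarrow> (\<exists>!f. f \<in> d \<and> f \<in> E')" for d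
  have same: "d \<in> c - {e} \<and> d \<in> E' \<longleftrightarrow> d \<in> c \<and> d \<in> E'" for d
    using assms(2) by blast
  have "P (c - {e}) \<longleftrightarrow> P c"
    unfolding P_def by (simp only: same)
  then show ?thesis
    using assms(1) unfolding selects_one_def P_def[symmetric] by auto
qed

lemma selects_one_singletonD: "selects_one C E' \<Longrightarrow> {e} \<in> C \<Longrightarrow> e \<in> E'"
  unfolding selects_one_def by blast

lemma selects_one_remove_singleton:
  "e \<in> E' \<Longrightarrow> selects_one (C - {{e}}) E' \<longleftrightarrow> selects_one C E'"
  unfolding selects_one_def by blast

lemma compatible_iff:
  "compatible (V, E, Cww, Cwr) E' \<longleftrightarrow>
     (\<forall>(a, l, b) \<in> E'. a \<in> V \<and> b \<in> V) \<and> E \<subseteq> E'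
     \<and> selects_one Cww E' \<and> selects_one Cwr E' \<and> rw_closed E'"
  unfolding compatible_def selects_one_def by simp

lemma compatibleD:
  assumes "compatible (V, E, Cww, Cwr) E'"
  shows "E \<subseteq> E'" "selects_one Cww E'" "selects_one Cwr E'" "rw_closed E'"
  using assms unfolding compatible_iff by simp_all

definition add_ww :: "('t, 'k) edge set \<Rightarrow> 't \<Rightarrow> 'k \<Rightarrow> 't \<Rightarrow> ('t, 'k) edge set" where
  "add_ww E t x t' = E \<union> ({(t, WW x, t')} \<union> {(s, RW x, t') | s. (t, WR x, s) \<in> E})"

definition add_wr :: "('t, 'k) edge set \<Rightarrow> 't \<Rightarrow> 'k \<Rightarrow> 't \<Rightarrow> ('t, 'k) edge set" where
  "add_wr E t x s = E \<union> ({(t, WR x, s)} \<union> {(s, RW x, t') | t'. (t, WW x, t') \<in> E})"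

lemma add_ww_subset:
  "E \<subseteq> E' \<Longrightarrow> rw_closed E' \<Longrightarrow> (t, WW x, t') \<in> E' \<Longrightarrow> add_ww E t x t' \<subseteq> E'"
  unfolding add_ww_def rw_closed_def by blast

lemma add_wr_subset:
  "E \<subseteq> E' \<Longrightarrow> rw_closed E' \<Longrightarrow> (t, WR x, s) \<in> E' \<Longrightarrow> add_wr E t x s \<subseteq> E'"
  unfolding add_wr_def rw_closed_def by blast

lemma compatible_ww_elim:
  assumes "c \<in> Cww" and "cyclic (add_ww E t x t')" and "\<not> cyclic E'"
  shows "compatible (V, E, (Cww - {c}) \<union> {c - {(t, WW x, t')}}, Cwr) E'
           \<longleftrightarrow> compatible (V, E, Cww, Cwr) E'"
proof -
  have "(t, WW x, t') \<notin> E'" if "E \<subseteq> E'" "rw_closed E'"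
    using add_ww_subset[OF that] assms(2,3) cyclic_mono by blast
  then show ?thesis
    using selects_one_remove_unselected[OF assms(1)] unfolding compatible_iff by blast
qed

lemma compatible_wr_elim:
  assumes "c \<in> Cwr" and "cyclic (add_wr E t x s)" and "\<not> cyclic E'"
  shows "compatible (V, E, Cww, (Cwr - {c}) \<union> {c - {(t, WR x, s)}}) E'
           \<longleftrightarrow> compatible (V, E, Cww, Cwr) E'"
proof -
  have "(t, WR x, s) \<notin> E'" if "E \<subseteq> E'" "rw_closed E'"
    using add_wr_subset[OF that] assms(2,3) cyclic_mono by blast
  then show ?thesis
    using selects_one_remove_unselected[OF assms(1)] unfolding compatible_iff by blast
qed

lemma compatible_ww_intro:
  assumes "{(t, WW x, t')} \<in> Cww"
  shows "compatible (V, add_ww E t x t', Cww - {{(t, WW x, t')}}, Cwr) E'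
           \<longleftrightarrow> compatible (V, E, Cww, Cwr) E'"
proof
  assume compat: "compatible (V, add_ww E t x t', Cww - {{(t, WW x, t')}}, Cwr) E'"
  then have edge: "(t, WW x, t') \<in> E'" and "E \<subseteq> E'"
    using compatibleD(1) unfolding add_ww_def by blast+
  with compat show "compatible (V, E, Cww, Cwr) E'"
    unfolding compatible_iff selects_one_remove_singleton[OF edge] by blast
next
  assume compat: "compatible (V, E, Cww, Cwr) E'"
  have edge: "(t, WW x, t') \<in> E'"
    using selects_one_singletonD[OF compatibleD(2)[OF compat] assms] .
  have "add_ww E t x t' \<subseteq> E'"
    using add_ww_subset[OF compatibleD(1,4)[OF compat] edge] .
  with compat show "compatible (V, add_ww E t x t', Cww - {{(t, WW x, t')}}, Cwr) E'"
    unfolding compatible_iff selects_one_remove_singleton[OF edge] by blast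
qed

lemma compatible_wr_intro:
  assumes "{(t, WR x, s)} \<in> Cwr"
  shows "compatible (V, add_wr E t x s, Cww, Cwr - {{(t, WR x, s)}}) E'
           \<longleftrightarrow> compatible (V, E, Cww, Cwr) E'"
proof
  assume compat: "compatible (V, add_wr E t x s, Cww, Cwr - {{(t, WR x, s)}}) E'"
  then have edge: "(t, WR x, s) \<in> E'" and "E \<subseteq> E'"
    using compatibleD(1) unfolding add_wr_def by blast+
  with compat show "compatible (V, E, Cww, Cwr) E'"
    unfolding compatible_iff selects_one_remove_singleton[OF edge] by blast
next
  assume compat: "compatible (V, E, Cww, Cwr) E'"
  have edge: "(t, WR x, s) \<in> E'"
    using selects_one_singletonD[OF compatibleD(3)[OF compat] assms] .
  have "add_wr E t x s \<subseteq> E'"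
    using add_wr_subset[OF compatibleD(1,4)[OF compat] edge] .
  with compat show "compatible (V, add_wr E t x s, Cww, Cwr - {{(t, WR x, s)}}) E'"
    unfolding compatible_iff selects_one_remove_singleton[OF edge] by blast
qed

lemma prune_step_compatible_iff:
  assumes "prune_step (St E Cww Cwr) (St Ep Cwwp Cwrp)" and "\<not> cyclic E'"
  shows "compatible (V, Ep, Cwwp, Cwrp) E' \<longleftrightarrow> compatible (V, E, Cww, Cwr) E'"
  using assms(1)
proof cases
  case (ww_elim c t x t')
  then show ?thesis
    using compatible_ww_elim[OF ww_elim(4) _ assms(2)] unfolding add_ww_def by simp
next
  case (wr_elim c t x s)
  then show ?thesis
    using compatible_wr_elim[OF wr_elim(4) _ assms(2)] unfolding add_wr_def by simp
next
  case (ww_intro t x t')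
  then show ?thesis
    using compatible_ww_intro[OF ww_intro(4)] unfolding add_ww_def by simp
next
  case (wr_intro t x s)
  then show ?thesis
    using compatible_wr_intro[OF wr_intro(4)] unfolding add_wr_def by simp
qed

lemma prune_step_Viol_not_ser_acyclic:
  assumes "prune_step (St E Cww Cwr) Viol"
  shows "\<not> ser_acyclic (V, E, Cww, Cwr)"
  using assms
proof cases
  case no_choice
  then show ?thesis
    unfolding ser_acyclic_def using compatibleD(2,3) selects_one_empty by (metis Un_iff)
next
  case cycle
  then show ?thesis
    unfolding ser_acyclic_def using compatibleD(1) cyclic_mono by metis
qed

fun pstate_ser_acyclic :: "'t set \<Rightarrow> ('t, 'k) pstate \<Rightarrow> bool" where
  "pstate_ser_acyclic V (St E Cww Cwr) \<longleftrightarrow> ser_acyclic (V, E, Cww, Cwr)"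
| "pstate_ser_acyclic V Viol \<longleftrightarrow> False"

lemma prune_step_preserves_ser_acyclic:
  assumes "prune_step s s'"
  shows "pstate_ser_acyclic V s' \<longleftrightarrow> pstate_ser_acyclic V s"
proof -
  obtain E Cww Cwr where s: "s = St E Cww Cwr"
    using assms by cases auto
  show ?thesis
  proof (cases s')
    case (St Ep Cwwp Cwrp)
    with assms have "compatible (V, Ep, Cwwp, Cwrp) E' \<longleftrightarrow> compatible (V, E, Cww, Cwr) E'"
      if "\<not> cyclic E'" for E'
      using prune_step_compatible_iff that unfolding s by blast
    then show ?thesis
      unfolding s St by (auto simp: ser_acyclic_def)
  next
    case Viol
    then show ?thesis
      using prune_step_Viol_not_ser_acyclic assms unfolding s by auto
  qed
qed

lemma prune_steps_preserve_ser_acyclic: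
  "prune_step\<^sup>*\<^sup>* s s' \<Longrightarrow> pstate_ser_acyclic V s' \<longleftrightarrow> pstate_ser_acyclic V s"
  by (induction rule: rtranclp_induct) (simp_all add: prune_step_preserves_ser_acyclic)

theorem theoremE1:
  fixes H :: "('t, 'k, 'v) history"
  assumes "wf_history H"
    and "hyper_polygraph H = (V, E, Cww, Cwr)"
  shows "(\<forall>Ep Cwwp Cwrp. prune_step\<^sup>*\<^sup>* (St E Cww Cwr) (St Ep Cwwp Cwrp) \<longrightarrow>
            (ser_acyclic (V, E, Cww, Cwr) \<longleftrightarrow> ser_acyclic (V, Ep, Cwwp, Cwrp)))
       \<and> (prune_step\<^sup>*\<^sup>* (St E Cww Cwr) Viol \<longrightarrow> \<not> ser_acyclic (V, E, Cww, Cwr))"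
  using prune_steps_preserve_ser_acyclic[where V = V] by fastforce

end
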